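(* Let $X$ be a pure $d$-dimensional simplicial complex, $1\le k\le d-1$, and $c\in X(k-1)$. Then the link $X_c$ is isomorphic to $R_c(X)$.
   Context: $X(j)$ = faces with $j+1$ elements; $X_c=\{\tau\setminus c:c\subseteq\tau\in X\}$. The representation complex $R_k(X)$ has vertex set $X(k)$ and, for $1\le i\le d-k$, $i$-faces the sets $S$ of $i+1$ distinct elements of $X(k)$ with $\bigcup S\in X(i+k)$ and $|\bigcap S|=k$; the core of such $S$ is $\bigcap S$. $R_c(X)$ is the complex consisting of $\emptyset$, the vertices $\{\tau\}$ with $\tau\in X(k)$, $c\subseteq\tau$, and all faces of $R_k(X)$ of dimension $\ge1$ whose core is $c$. Two complexes are isomorphic if there is a bijection between their faces preserving inclusion in both directions. *)

theory Defs
  imports Main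
begin

definition simplicial_complex :: "'a set set \<Rightarrow> bool" where
  "simplicial_complex X \<longleftrightarrow> finite X \<and> X \<noteq> {} \<and> (\<forall>\<sigma>\<in>X. finite \<sigma>) \<and>
     (\<forall>\<sigma>\<in>X. \<forall>\<tau>. \<tau> \<subseteq> \<sigma> \<longrightarrow> \<tau> \<in> X)"

definition faces_of_dim :: "'a set set \<Rightarrow> nat \<Rightarrow> 'a set set" where
  "faces_of_dim X j = {\<sigma>\<in>X. card \<sigma> = j + 1}"

definition pure_complex :: "'a set set \<Rightarrow> nat \<Rightarrow> bool" where
  "pure_complex X d \<longleftrightarrow> simplicial_complex X \<and>
     (\<forall>\<sigma>\<in>X. card \<sigma> \<le> d + 1 \<and> (\<exists>\<tau>\<in>X. \<sigma> \<subseteq> \<tau> \<and> card \<tau> = d + 1))"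

definition link :: "'a set set \<Rightarrow> 'a set \<Rightarrow> 'a set set" where
  "link X c = {\<tau> - c | \<tau>. \<tau> \<in> X \<and> c \<subseteq> \<tau>}"

text \<open>The i-faces of the representation complex R_k(X), for 1 \<le> i \<le> d-k.\<close>
definition rep_faces :: "'a set set \<Rightarrow> nat \<Rightarrow> nat \<Rightarrow> nat \<Rightarrow> 'a set set set" where
  "rep_faces X d k i = {S. S \<subseteq> faces_of_dim X k \<and> card S = i + 1 \<and>
       \<Union>S \<in> faces_of_dim X (i + k) \<and> card (\<Inter>S) = k}"

definition rep_complex_c :: "'a set set \<Rightarrow> nat \<Rightarrow> nat \<Rightarrow> 'a set \<Rightarrow> 'a set set set" where
  "rep_complex_c X d k c =
     {{}} \<union> {{\<tau>} | \<tau>. \<tau> \<in> faces_of_dim X k \<and> c \<subseteq> \<tau>}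
     \<union> {S. \<exists>i. 1 \<le> i \<and> i \<le> d - k \<and> S \<in> rep_faces X d k i \<and> \<Inter>S = c}"

definition complex_iso :: "'a set set \<Rightarrow> 'b set set \<Rightarrow> bool" where
  "complex_iso K L \<longleftrightarrow> (\<exists>f. bij_betw f K L \<and> (\<forall>A\<in>K. \<forall>B\<in>K. A \<subseteq> B \<longleftrightarrow> f A \<subseteq> f B))"

end

theory Submission
  imports Defs
begin

text \<open>The isomorphism sends a face \<sigma> of the link to the set of k-faces c \<union> {v}, v \<in> \<sigma>.
  For two or more vertices these k-faces have core exactly c and union \<sigma> \<union> c, so they
  form a face of R_k(X) of dimension |\<sigma>| - 1, bounded by d - k since |\<sigma> \<union> c| \<le> d + 1.
  Conversely every face of R_c(X) consists of k-faces c \<union> {v}, and removing c from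
  its union recovers \<sigma>. The map is an order embedding because v \<notin> c is recovered
  from c \<union> {v}.\<close>

definition join_vertices :: "'a set \<Rightarrow> 'a set \<Rightarrow> 'a set set" where
  "join_vertices c \<sigma> = (\<lambda>v. insert v c) ` \<sigma>"

lemma simplicial_complex_subset_closed:
  "simplicial_complex X \<Longrightarrow> \<sigma> \<in> X \<Longrightarrow> \<tau> \<subseteq> \<sigma> \<Longrightarrow> \<tau> \<in> X"
  unfolding simplicial_complex_def by blast

lemma simplicial_complex_finite_face: "simplicial_complex X \<Longrightarrow> \<sigma> \<in> X \<Longrightarrow> finite \<sigma>"
  unfolding simplicial_complex_def by blast

lemma complex_iso_image:
  assumes "\<And>A B. A \<in> K \<Longrightarrow> B \<in> K \<Longrightarrow> A \<subseteq> B \<longleftrightarrow> f A \<subseteq> f B"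
  shows "complex_iso K (f ` K)"
proof -
  have "inj_on f K"
    by (rule inj_onI) (metis assms subset_antisym order_refl)
  then show ?thesis
    unfolding complex_iso_def using assms by (blast intro: inj_on_imp_bij_betw)
qed

lemma mem_link_iff: "\<sigma> \<in> link X c \<longleftrightarrow> \<sigma> \<inter> c = {} \<and> \<sigma> \<union> c \<in> X"
proof
  assume "\<sigma> \<in> link X c"
  then obtain \<tau> where "\<sigma> = \<tau> - c" "\<tau> \<in> X" "c \<subseteq> \<tau>"
    unfolding link_def by blast
  moreover from this have "\<sigma> \<union> c = \<tau>" by blast
  ultimately show "\<sigma> \<inter> c = {} \<and> \<sigma> \<union> c \<in> X" by auto
next
  assume "\<sigma> \<inter> c = {} \<and> \<sigma> \<union> c \<in> X"
  then show "\<sigma> \<in> link X c"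
    unfolding link_def by (intro CollectI exI[of _ "\<sigma> \<union> c"]) blast
qed

lemma join_vertices_subset_iff:
  assumes "A \<inter> c = {}"
  shows "join_vertices c A \<subseteq> join_vertices c B \<longleftrightarrow> A \<subseteq> B"
proof
  assume sub: "join_vertices c A \<subseteq> join_vertices c B"
  show "A \<subseteq> B"
  proof
    fix v assume "v \<in> A"
    then obtain w where "w \<in> B" "insert v c = insert w c"
      using sub unfolding join_vertices_def by blast
    moreover have "v \<notin> c" using assms \<open>v \<in> A\<close> by blast
    ultimately show "v \<in> B" by (metis insertE insertI1)
  qed
qed (auto simp: join_vertices_def)

lemma card_join_vertices:
  assumes "\<sigma> \<inter> c = {}"
  shows "card (join_vertices c \<sigma>) = card \<sigma>"
proof -
  have "inj_on (\<lambda>v. insert v c) \<sigma>"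
    using assms by (auto intro!: inj_onI)
  then show ?thesis unfolding join_vertices_def by (rule card_image)
qed

lemma Union_join_vertices: "\<sigma> \<noteq> {} \<Longrightarrow> \<Union>(join_vertices c \<sigma>) = \<sigma> \<union> c"
  unfolding join_vertices_def by blast

lemma Inter_join_vertices:
  assumes "\<sigma> \<inter> c = {}" "a \<in> \<sigma>" "b \<in> \<sigma>" "a \<noteq> b"
  shows "\<Inter>(join_vertices c \<sigma>) = c"
proof
  show "\<Inter>(join_vertices c \<sigma>) \<subseteq> c"
  proof
    fix x assume "x \<in> \<Inter>(join_vertices c \<sigma>)"
    then have "x \<in> insert a c" "x \<in> insert b c"
      using assms(2,3) unfolding join_vertices_def by auto
    then show "x \<in> c" using assms(4) by blast
  qed
qed (auto simp: join_vertices_def)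

lemma join_vertices_Union_diff:
  assumes "\<And>\<tau>. \<tau> \<in> S \<Longrightarrow> c \<subseteq> \<tau> \<and> card (\<tau> - c) = 1"
  shows "join_vertices c (\<Union>S - c) = S"
proof -
  have apex: "\<exists>v. v \<notin> c \<and> \<tau> = insert v c" if "\<tau> \<in> S" for \<tau>
  proof -
    have "c \<subseteq> \<tau>" "card (\<tau> - c) = 1" using assms that by auto
    then obtain v where "\<tau> - c = {v}" by (meson card_1_singletonE)
    with \<open>c \<subseteq> \<tau>\<close> show ?thesis by blast
  qed
  show ?thesis
  proof
    show "join_vertices c (\<Union>S - c) \<subseteq> S"
    proof
      fix x assume "x \<in> join_vertices c (\<Union>S - c)"
      then obtain v \<tau> where "x = insert v c" "v \<in> \<tau>" "\<tau> \<in> S" "v \<notin> c"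
        unfolding join_vertices_def by blast
      moreover obtain w where "\<tau> = insert w c" using apex \<open>\<tau> \<in> S\<close> by blast
      ultimately show "x \<in> S" by blast
    qed
    show "S \<subseteq> join_vertices c (\<Union>S - c)"
    proof
      fix \<tau> assume "\<tau> \<in> S"
      then obtain v where "v \<notin> c" "\<tau> = insert v c" using apex by blast
      with \<open>\<tau> \<in> S\<close> show "\<tau> \<in> join_vertices c (\<Union>S - c)"
        unfolding join_vertices_def by blast
    qed
  qed
qed

lemma card_Diff_eq_1_of_faces_of_dim:
  assumes "\<tau> \<in> faces_of_dim X k" "c \<subseteq> \<tau>" "card c = k" "finite c"
  shows "card (\<tau> - c) = 1"
  using assms unfolding faces_of_dim_def by (simp add: card_Diff_subset)

context
  fixes X :: "'a set set" and d k :: nat and c :: "'a set"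
  assumes complex: "simplicial_complex X"
    and bounded: "\<And>\<sigma>. \<sigma> \<in> X \<Longrightarrow> card \<sigma> \<le> d + 1"
    and c_face: "c \<in> X" and card_c: "card c = k"
begin

lemma finite_c: "finite c"
  using simplicial_complex_finite_face[OF complex c_face] .

lemma join_vertices_link_in_rep_complex_c:
  assumes "\<sigma> \<in> link X c"
  shows "join_vertices c \<sigma> \<in> rep_complex_c X d k c"
proof -
  have disj: "\<sigma> \<inter> c = {}" and face: "\<sigma> \<union> c \<in> X"
    using assms by (auto simp: mem_link_iff)
  have fin: "finite \<sigma>"
    using simplicial_complex_finite_face[OF complex face] by simp
  have k_faces: "join_vertices c \<sigma> \<subseteq> faces_of_dim X k"
  proof
    fix \<tau> assume "\<tau> \<in> join_vertices c \<sigma>"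
    then obtain v where v: "v \<in> \<sigma>" "\<tau> = insert v c" unfolding join_vertices_def by blast
    then have "\<tau> \<in> X"
      using simplicial_complex_subset_closed[OF complex face] by blast
    moreover have "v \<notin> c" using disj v(1) by blast
    ultimately show "\<tau> \<in> faces_of_dim X k"
      using v(2) finite_c card_c unfolding faces_of_dim_def by simp
  qed
  consider "\<sigma> = {}" | v where "\<sigma> = {v}" | a b where "a \<in> \<sigma>" "b \<in> \<sigma>" "a \<noteq> b"
    by blast
  then show ?thesis
  proof cases
    case 1
    then show ?thesis unfolding rep_complex_c_def join_vertices_def by simp
  next
    case 2
    then show ?thesis
      using k_faces unfolding rep_complex_c_def join_vertices_def by auto
  next
    case (3 a b)
    define i where "i = card \<sigma> - 1"
    have card_\<sigma>: "card \<sigma> = i + 1" and "1 \<le> i"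
    proof -
      have "card {a, b} \<le> card \<sigma>" using 3 fin by (intro card_mono) auto
      then show "card \<sigma> = i + 1" "1 \<le> i" using 3(3) unfolding i_def by auto
    qed
    have "card (\<sigma> \<union> c) = i + 1 + k"
      using card_Un_disjoint[OF fin finite_c disj] card_\<sigma> card_c by simp
    then have "i \<le> d - k" using bounded[OF face] by simp
    have core: "\<Inter>(join_vertices c \<sigma>) = c"
      using Inter_join_vertices[OF disj 3] .
    have union: "\<Union>(join_vertices c \<sigma>) = \<sigma> \<union> c"
      using 3(1) by (intro Union_join_vertices) blast
    have "join_vertices c \<sigma> \<in> rep_faces X d k i"
      using k_faces face card_\<sigma> \<open>card (\<sigma> \<union> c) = i + 1 + k\<close> card_c
      by (simp add: rep_faces_def faces_of_dim_def core union card_join_vertices[OF disj])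
    then show ?thesis
      unfolding rep_complex_c_def using \<open>1 \<le> i\<close> \<open>i \<le> d - k\<close> core by blast
  qed
qed

lemma rep_complex_c_in_join_vertices_link:
  assumes "S \<in> rep_complex_c X d k c"
  shows "S \<in> join_vertices c ` link X c"
proof -
  have k_faces: "\<tau> \<in> faces_of_dim X k \<and> c \<subseteq> \<tau>" if "\<tau> \<in> S" for \<tau>
    using assms that unfolding rep_complex_c_def rep_faces_def by auto
  have "\<Union>S \<in> X" if "S \<noteq> {}"
    using assms that unfolding rep_complex_c_def rep_faces_def faces_of_dim_def by auto
  then have "\<Union>S \<union> c \<in> X"
  proof (cases "S = {}")
    case False
    then have "c \<subseteq> \<Union>S" using k_faces by blast
    with False show ?thesis using \<open>S \<noteq> {} \<Longrightarrow> \<Union>S \<in> X\<close> by (simp add: Un_absorb2)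
  qed (simp add: c_face)
  moreover have "(\<Union>S - c) \<inter> c = {}" "(\<Union>S - c) \<union> c = \<Union>S \<union> c"
    by blast+
  ultimately have "\<Union>S - c \<in> link X c"
    by (simp add: mem_link_iff)
  moreover have "join_vertices c (\<Union>S - c) = S"
    using k_faces card_Diff_eq_1_of_faces_of_dim[OF _ _ card_c finite_c]
    by (intro join_vertices_Union_diff) blast
  ultimately show ?thesis by (metis image_eqI)
qed

lemma rep_complex_c_eq_image_link: "rep_complex_c X d k c = join_vertices c ` link X c"
  using join_vertices_link_in_rep_complex_c rep_complex_c_in_join_vertices_link by blast

end

theorem mainTheorem14:
  fixes X :: "'a set set" and d k :: nat and c :: "'a set"
  assumes "pure_complex X d"
    and "1 \<le> k" and "k \<le> d - 1"
    and "c \<in> faces_of_dim X (k - 1)"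
  shows "complex_iso (link X c) (rep_complex_c X d k c)"
proof -
  have complex: "simplicial_complex X" and bounded: "\<And>\<sigma>. \<sigma> \<in> X \<Longrightarrow> card \<sigma> \<le> d + 1"
    using assms(1) unfolding pure_complex_def by auto
  have c_face: "c \<in> X" and card_c: "card c = k"
    using assms(2,4) unfolding faces_of_dim_def by auto
  have "complex_iso (link X c) (join_vertices c ` link X c)"
    by (rule complex_iso_image) (auto simp: mem_link_iff join_vertices_subset_iff)
  then show ?thesis
    using rep_complex_c_eq_image_link[OF complex bounded c_face card_c] by simp
qed

end
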